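(* Let $s\in\mathbb{N}$, $s\le T$, and let $\phi$ be a monetary utility function on $\mathcal{R}^\infty_{s,T}$ such that $$\phi(X)={\rm ess}\inf_{a\in\mathcal{M}}\{\langle X,a\rangle_{s,T}-\phi^{\#}(a)\},\qquad X\in\mathcal{R}^\infty_{s,T},$$ for some $\mathcal{M}\subset D_{s,T}$. Suppose $\mathcal{M}$ is compact with respect to $\|\cdot\|_{A^1}$, stable under concatenation, and there is $b\in A^1_+$ with $\Delta a_t\le\Delta b_t$ for all $a\in\mathcal{M}$, $t\in\mathbb{N}$. Then for every $X\in\mathcal{R}^\infty_{s,T}$ there exists $a^X\in\mathcal{M}$ such that the insurance version $\Psi(X):=-\phi(-X)$ satisfies $$\Psi(X)=\langle X,a^X\rangle_{s,T}+\phi^{\#}(a^X).$$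
   Context: Filtered probability space $(\Omega,\mathcal{F},(\mathcal{F}_t)_{t\in\mathbb{N}},P)$, $\mathcal{F}_0$ trivial; a.s. (in)equalities; $T\in\mathbb{N}$ fixed. $\mathcal{R}^\infty$: bounded adapted processes; $A^1$: adapted $a$ with $\|a\|_{A^1}:=E\sum_t|\Delta a_t|<\infty$ ($a_{-1}=0$, $\Delta a_t=a_t-a_{t-1}$); $A^1_+$: those with all $\Delta a_t\ge0$. For stopping times $\tau\le\theta$: $\pi_{\tau,\theta}(X)_t=1_{\{\tau\le t\}}X_{t\wedge\theta}$, $\mathcal{R}^\infty_{\tau,\theta}=\pi_{\tau,\theta}\mathcal{R}^\infty$, $A^1_{\tau,\theta}=\pi_{\tau,\theta}A^1$, $\langle X,a\rangle_{\tau,\theta}=E(\sum_{t\in[\tau,\theta]\cap\mathbb{N}}X_t\Delta a_t\mid\mathcal{F}_\tau)$, $D_{s,T}=\{a\in\pi_{s,T}A^1_+:\langle1,a\rangle_{s,T}=1\}$. A monetary utility function on $\mathcal{R}^\infty_{s,T}$ is $\phi:\mathcal{R}^\infty_{s,T}\to L^\infty(\mathcal{F}_s)$ with $\phi(1_AX)=1_A\phi(X)$ for $A\in\mathcal{F}_s$, monotone, and $\phi(X+m1_{[s,\infty)})=\phi(X)+m$ for $m\in L^\infty(\mathcal{F}_s)$; $\mathcal{C}_\phi=\{X:\phi(X)\ge0\}$, $\phi^{\#}(a)={\rm ess}\inf_{X\in\mathcal{C}_\phi}\langle X,a\rangle_{s,T}$. Concatenation: for $a,b\in A^1_+$, a finite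 stopping time $\theta$ and $A\in\mathcal{F}_\theta$, $(a\oplus^\theta_Ab)_t=1_Ca_t+1_{C^c}\big(a_{\theta-1}+\frac{\langle1,a\rangle_{\theta,\infty}}{\langle1,b\rangle_{\theta,\infty}}(b_t-b_{\theta-1})\big)$, where $C=\{t<\theta\}\cup A^c\cup\{\langle1,b\rangle_{\theta,\infty}=0\}$. A set $\mathcal{M}\subset A^1_+$ is stable under concatenation if $a\oplus^\theta_Ab\in\mathcal{M}$ for all $a,b\in\mathcal{M}$, all finite stopping times $\theta$ and all $A\in\mathcal{F}_\theta$. *)

theory Defs
  imports "HOL-Probability.Probability"
begin

type_synonym 'a proc = "nat \<Rightarrow> 'a \<Rightarrow> real"

definition prev :: "'a proc \<Rightarrow> nat \<Rightarrow> 'a \<Rightarrow> real" where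
  "prev a t \<omega> = (if t = 0 then 0 else a (t - 1) \<omega>)"

definition dlt :: "'a proc \<Rightarrow> nat \<Rightarrow> 'a \<Rightarrow> real" where
  "dlt a t \<omega> = a t \<omega> - prev a t \<omega>"

definition adapted :: "(nat \<Rightarrow> 'a measure) \<Rightarrow> 'a proc \<Rightarrow> bool" where
  "adapted F X \<longleftrightarrow> (\<forall>t. X t \<in> borel_measurable (F t))"

definition Rinf :: "'a measure \<Rightarrow> (nat \<Rightarrow> 'a measure) \<Rightarrow> 'a proc set" where
  "Rinf M F = {X. adapted F X \<and> (\<exists>c. \<forall>t. AE \<omega> in M. \<bar>X t \<omega>\<bar> \<le> c)}"

definition A1norm :: "'a measure \<Rightarrow> 'a proc \<Rightarrow> ennreal" where
  "A1norm M a = (\<integral>\<^sup>+ \<omega>. (\<Sum>t. ennreal \<bar>dlt a t \<omega>\<bar>) \<partial>M)"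

definition A1 :: "'a measure \<Rightarrow> (nat \<Rightarrow> 'a measure) \<Rightarrow> 'a proc set" where
  "A1 M F = {a. adapted F a \<and> A1norm M a < \<infinity>}"

definition A1p :: "'a measure \<Rightarrow> (nat \<Rightarrow> 'a measure) \<Rightarrow> 'a proc set" where
  "A1p M F = {a \<in> A1 M F. \<forall>t. AE \<omega> in M. 0 \<le> dlt a t \<omega>}"

definition pist :: "nat \<Rightarrow> nat \<Rightarrow> 'a proc \<Rightarrow> 'a proc" where
  "pist s T X = (\<lambda>t \<omega>. if s \<le> t then X (min t T) \<omega> else 0)"

definition RsT :: "'a measure \<Rightarrow> (nat \<Rightarrow> 'a measure) \<Rightarrow> nat \<Rightarrow> nat \<Rightarrow> 'a proc set" where
  "RsT M F s T = pist s T ` Rinf M F"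

definition pairing :: "'a measure \<Rightarrow> (nat \<Rightarrow> 'a measure) \<Rightarrow> nat \<Rightarrow> nat \<Rightarrow> 'a proc \<Rightarrow> 'a proc \<Rightarrow> 'a \<Rightarrow> real" where
  "pairing M F s T X a = real_cond_exp M (F s) (\<lambda>\<omega>. \<Sum>t\<in>{s..T}. X t \<omega> * dlt a t \<omega>)"

definition DsT :: "'a measure \<Rightarrow> (nat \<Rightarrow> 'a measure) \<Rightarrow> nat \<Rightarrow> nat \<Rightarrow> 'a proc set" where
  "DsT M F s T = {a \<in> pist s T ` A1p M F. AE \<omega> in M. pairing M F s T (\<lambda>_ _. 1) a \<omega> = 1}"

definition Linf :: "'a measure \<Rightarrow> 'a measure \<Rightarrow> ('a \<Rightarrow> real) set" where
  "Linf M G = {m. m \<in> borel_measurable G \<and> (\<exists>c. AE \<omega> in M. \<bar>m \<omega>\<bar> \<le> c)}"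

definition monetary_utility ::
  "'a measure \<Rightarrow> (nat \<Rightarrow> 'a measure) \<Rightarrow> nat \<Rightarrow> nat \<Rightarrow> ('a proc \<Rightarrow> 'a \<Rightarrow> real) \<Rightarrow> bool" where
  "monetary_utility M F s T \<phi> \<longleftrightarrow>
     (\<forall>X\<in>RsT M F s T. \<phi> X \<in> Linf M (F s)) \<and>
     (\<forall>X\<in>RsT M F s T. \<forall>A\<in>sets (F s).
        AE \<omega> in M. \<phi> (\<lambda>t \<omega>'. indicator A \<omega>' * X t \<omega>') \<omega> = indicator A \<omega> * \<phi> X \<omega>) \<and>
     (\<forall>X\<in>RsT M F s T. \<forall>Y\<in>RsT M F s T.
        (\<forall>t. AE \<omega> in M. X t \<omega> \<le> Y t \<omega>) \<longrightarrow> (AE \<omega> in M. \<phi> X \<omega> \<le> \<phi> Y \<omega>)) \<and>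
     (\<forall>X\<in>RsT M F s T. \<forall>m\<in>Linf M (F s).
        AE \<omega> in M. \<phi> (\<lambda>t \<omega>'. X t \<omega>' + (if s \<le> t then m \<omega>' else 0)) \<omega> = \<phi> X \<omega> + m \<omega>)"

definition acc_set ::
  "'a measure \<Rightarrow> (nat \<Rightarrow> 'a measure) \<Rightarrow> nat \<Rightarrow> nat \<Rightarrow> ('a proc \<Rightarrow> 'a \<Rightarrow> real) \<Rightarrow> 'a proc set" where
  "acc_set M F s T \<phi> = {X \<in> RsT M F s T. AE \<omega> in M. 0 \<le> \<phi> X \<omega>}"

definition is_essinf :: "'a measure \<Rightarrow> ('a \<Rightarrow> ereal) set \<Rightarrow> ('a \<Rightarrow> ereal) \<Rightarrow> bool" where
  "is_essinf M S Y \<longleftrightarrow> Y \<in> borel_measurable M \<and> (\<forall>Z\<in>S. AE \<omega> in M. Y \<omega> \<le> Z \<omega>) \<and>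
     (\<forall>W\<in>borel_measurable M. (\<forall>Z\<in>S. AE \<omega> in M. W \<omega> \<le> Z \<omega>) \<longrightarrow> (AE \<omega> in M. W \<omega> \<le> Y \<omega>))"

definition essinf :: "'a measure \<Rightarrow> ('a \<Rightarrow> ereal) set \<Rightarrow> 'a \<Rightarrow> ereal" where
  "essinf M S = (SOME Y. is_essinf M S Y)"

definition phi_sharp ::
  "'a measure \<Rightarrow> (nat \<Rightarrow> 'a measure) \<Rightarrow> nat \<Rightarrow> nat \<Rightarrow> ('a proc \<Rightarrow> 'a \<Rightarrow> real) \<Rightarrow> 'a proc \<Rightarrow> 'a \<Rightarrow> ereal" where
  "phi_sharp M F s T \<phi> a =
     essinf M ((\<lambda>X \<omega>. ereal (pairing M F s T X a \<omega>)) ` acc_set M F s T \<phi>)"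

definition mass_from :: "'a measure \<Rightarrow> (nat \<Rightarrow> 'a measure) \<Rightarrow> ('a \<Rightarrow> nat) \<Rightarrow> 'a proc \<Rightarrow> 'a \<Rightarrow> real" where
  "mass_from M F \<theta> a = real_cond_exp M (filtration.pre_sigma (space M) F \<theta>)
      (\<lambda>\<omega>. \<Sum>t. (if \<theta> \<omega> \<le> t then dlt a t \<omega> else 0))"

definition concat ::
  "'a measure \<Rightarrow> (nat \<Rightarrow> 'a measure) \<Rightarrow> 'a proc \<Rightarrow> 'a proc \<Rightarrow> ('a \<Rightarrow> nat) \<Rightarrow> 'a set \<Rightarrow> 'a proc" where
  "concat M F a b \<theta> A = (\<lambda>t \<omega>.
     if t < \<theta> \<omega> \<or> \<omega> \<notin> A \<or> mass_from M F \<theta> b \<omega> = 0 then a t \<omega>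
     else prev a (\<theta> \<omega>) \<omega> + mass_from M F \<theta> a \<omega> / mass_from M F \<theta> b \<omega> * (b t \<omega> - prev b (\<theta> \<omega>) \<omega>))"

text \<open>Stopping times with values in nat are automatically finite.\<close>
definition stable_concat :: "'a measure \<Rightarrow> (nat \<Rightarrow> 'a measure) \<Rightarrow> 'a proc set \<Rightarrow> bool" where
  "stable_concat M F \<M> \<longleftrightarrow>
     (\<forall>a\<in>\<M>. \<forall>b\<in>\<M>. \<forall>\<theta>::'a \<Rightarrow> nat. stopping_time F \<theta> \<longrightarrow>
        (\<forall>A\<in>sets (filtration.pre_sigma (space M) F \<theta>). concat M F a b \<theta> A \<in> \<M>))"

definition A1_open :: "'a measure \<Rightarrow> (nat \<Rightarrow> 'a measure) \<Rightarrow> 'a proc set \<Rightarrow> bool" where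
  "A1_open M F U \<longleftrightarrow> U \<subseteq> A1 M F \<and> (\<forall>x\<in>U. \<exists>e>0. \<forall>y\<in>A1 M F.
      A1norm M (\<lambda>t \<omega>. y t \<omega> - x t \<omega>) < ennreal e \<longrightarrow> y \<in> U)"

definition A1_compact :: "'a measure \<Rightarrow> (nat \<Rightarrow> 'a measure) \<Rightarrow> 'a proc set \<Rightarrow> bool" where
  "A1_compact M F K \<longleftrightarrow> K \<subseteq> A1 M F \<and>
     (\<forall>\<U>. (\<forall>U\<in>\<U>. A1_open M F U) \<and> K \<subseteq> \<Union>\<U> \<longrightarrow> (\<exists>\<V>\<subseteq>\<U>. finite \<V> \<and> K \<subseteq> \<Union>\<V>))"

end

(*
  Psi(X) = -phi(-X) is the essential supremum over a in M of <X,a> + phi#(a). Pasting two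
  elements of M along an F_s-event (concatenation at the constant time s) shows that this family
  is upward directed, so some sequence b_n in M with almost surely increasing values maximizes
  E arctan(<X,a> + phi#(a)). By compactness a subsequence converges to some x in M so fast in
  A^1 that every pairing <Y,b_n> converges almost surely. As phi#(a) is the essential infimum of
  the pairings <Y,a> over acceptable Y, it is upper semicontinuous along that subsequence; hence
  x attains the maximal expectation and, by directedness, dominates the whole family.
*)
theory Submission
  imports Defs
begin

text \<open>A bounded order embedding of the extended reals: comparing expectations of
  \<open>arctan_ereal \<circ> f\<close> replaces comparing the possibly infinite, non-integrable \<open>f\<close>.\<close>

definition arctan_ereal :: "ereal \<Rightarrow> real" where
  "arctan_ereal x =
     (if x = \<infinity> then pi / 2 else if x = -\<infinity> then - pi / 2 else arctan (real_of_ereal x))"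

lemma strict_mono_arctan_ereal: "strict_mono arctan_ereal"
proof (rule strict_monoI)
  fix x y :: ereal assume "x < y"
  then show "arctan_ereal x < arctan_ereal y"
    by (cases x; cases y) (use arctan_bounded arctan_less_iff in \<open>auto simp: arctan_ereal_def\<close>)
qed

lemma arctan_ereal_le_iff [simp]: "arctan_ereal x \<le> arctan_ereal y \<longleftrightarrow> x \<le> y"
  by (rule strict_mono_less_eq[OF strict_mono_arctan_ereal])

lemma arctan_ereal_eq_iff [simp]: "arctan_ereal x = arctan_ereal y \<longleftrightarrow> x = y"
  by (rule strict_mono_eq[OF strict_mono_arctan_ereal])

lemma abs_arctan_ereal_le: "\<bar>arctan_ereal x\<bar> \<le> 2"
proof -
  have "\<bar>arctan r\<bar> \<le> 2" for r
    using arctan_bounded[of r] pi_less_4 by linarith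
  then show ?thesis
    using pi_less_4 pi_gt3 by (auto simp: arctan_ereal_def)
qed

lemma borel_measurable_arctan_ereal [measurable]:
  assumes f: "f \<in> borel_measurable M"
  shows "(\<lambda>x. arctan_ereal (f x)) \<in> borel_measurable M"
proof -
  have "{x \<in> space M. f x = c} \<in> sets M" for c :: ereal
    using measurable_sets[OF f, of "{c}"] by (simp add: vimage_def Int_def conj_commute)
  then show ?thesis unfolding arctan_ereal_def using f by measurable
qed

lemma (in prob_space) integrable_arctan_ereal:
  "f \<in> borel_measurable M \<Longrightarrow> integrable M (\<lambda>x. arctan_ereal (f x))"
  by (rule integrable_const_bound[where B = 2]) (auto simp: abs_arctan_ereal_le)

lemma (in prob_space) integral_arctan_ereal_bounds:
  assumes "f \<in> borel_measurable M"
  shows "-2 \<le> (\<integral>x. arctan_ereal (f x) \<partial>M)" "(\<integral>x. arctan_ereal (f x) \<partial>M) \<le> 2"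
proof -
  have "\<bar>\<integral>x. arctan_ereal (f x) \<partial>M\<bar> \<le> (\<integral>x. \<bar>arctan_ereal (f x)\<bar> \<partial>M)"
    by (rule integral_abs_bound)
  also have "\<dots> \<le> (\<integral>x. 2 \<partial>M)"
    using integrable_arctan_ereal[OF assms] abs_arctan_ereal_le by (intro integral_mono) auto
  finally show "-2 \<le> (\<integral>x. arctan_ereal (f x) \<partial>M)" "(\<integral>x. arctan_ereal (f x) \<partial>M) \<le> 2"
    by (simp_all add: prob_space)
qed

lemma (in prob_space) integral_arctan_ereal_mono_AE:
  assumes "f \<in> borel_measurable M" "g \<in> borel_measurable M" "AE \<omega> in M. f \<omega> \<le> g \<omega>"
  shows "(\<integral>\<omega>. arctan_ereal (f \<omega>) \<partial>M) \<le> (\<integral>\<omega>. arctan_ereal (g \<omega>) \<partial>M)"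
  using assms by (intro integral_mono_AE integrable_arctan_ereal) auto

lemma (in prob_space) AE_eq_if_AE_le_integral_arctan_ereal_le:
  assumes [measurable]: "f \<in> borel_measurable M" "g \<in> borel_measurable M"
    and le: "AE x in M. f x \<le> g x"
    and int_le: "(\<integral>x. arctan_ereal (g x) \<partial>M) \<le> (\<integral>x. arctan_ereal (f x) \<partial>M)"
  shows "AE x in M. f x = g x"
proof -
  let ?d = "\<lambda>x. arctan_ereal (g x) - arctan_ereal (f x)"
  have int: "integrable M ?d"
    by (intro Bochner_Integration.integrable_diff integrable_arctan_ereal) auto
  have nonneg: "AE x in M. 0 \<le> ?d x"
    using le by eventually_elim simp
  have "(\<integral>x. ?d x \<partial>M) = 0"
    using int_le integral_nonneg_AE[OF nonneg]
    by (simp add: Bochner_Integration.integral_diff integrable_arctan_ereal)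
  then have "AE x in M. ?d x = 0"
    using integral_nonneg_eq_0_iff_AE[OF int] nonneg by simp
  then show ?thesis
    by eventually_elim simp
qed

section \<open>Essential infima\<close>

lemma le_if_less_plus_inverse_Suc:
  fixes x y :: real
  assumes "\<And>n. x < y + 1 / real (Suc n)"
  shows "x \<le> y"
proof (rule field_le_epsilon)
  fix e :: real assume "0 < e"
  then obtain n where "1 / real (Suc n) < e"
    by (rule nat_approx_posE)
  with assms[of n] show "x \<le> y + e"
    by linarith
qed

lemma (in prob_space) ex_INF_minimizing_sequence:
  fixes S :: "('a \<Rightarrow> ereal) set"
  assumes "S \<noteq> {}" "S \<subseteq> borel_measurable M"
  shows "\<exists>h :: nat \<Rightarrow> 'a \<Rightarrow> ereal. range h \<subseteq> S \<and> (\<forall>f :: nat \<Rightarrow> 'a \<Rightarrow> ereal. range f \<subseteq> S \<longrightarrow>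
           (\<integral>\<omega>. arctan_ereal (INF n. h n \<omega>) \<partial>M) \<le> (\<integral>\<omega>. arctan_ereal (INF n. f n \<omega>) \<partial>M))"
proof -
  define E where "E f = (\<integral>\<omega>. arctan_ereal (INF n. f n \<omega>) \<partial>M)" for f :: "nat \<Rightarrow> 'a \<Rightarrow> ereal"
  define I where "I = (INF f \<in> {f. range f \<subseteq> S}. E f)"
  have INF_meas: "(\<lambda>\<omega>. INF n. f n \<omega>) \<in> borel_measurable M" if "range f \<subseteq> S" for f :: "nat \<Rightarrow> 'a \<Rightarrow> ereal"
    using that assms(2) by (intro borel_measurable_INF) (auto intro: countableI_type)
  have ne: "{f. range f \<subseteq> S} \<noteq> {}"
    using assms(1) by auto
  have bdd: "bdd_below (E ` {f. range f \<subseteq> S})"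
    using integral_arctan_ereal_bounds(1)[OF INF_meas] unfolding E_def by (intro bdd_belowI2) auto
  have "\<exists>f. range f \<subseteq> S \<and> E f < I + 1 / real (Suc k)" for k
    using cINF_less_iff[OF ne bdd, of "I + 1 / real (Suc k)"] ne by (auto simp: I_def)
  then obtain g where g: "\<And>k. range (g k) \<subseteq> S" "\<And>k. E (g k) < I + 1 / real (Suc k)"
    by metis
  \<comment> \<open>merging all \<open>g k\<close> into one sequence gives a subfamily below each of them\<close>
  define h where "h n = g (fst (prod_decode n)) (snd (prod_decode n))" for n
  have h: "range h \<subseteq> S"
    using g(1) by (auto simp: h_def)
  have "E h \<le> E (g k)" for k
  proof -
    have "(INF n. h n \<omega>) \<le> (INF n. g k n \<omega>)" for \<omega>
    proof (rule INF_mono)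
      fix n
      show "\<exists>m\<in>UNIV. h m \<omega> \<le> g k n \<omega>"
        by (intro bexI[of _ "prod_encode (k, n)"]) (simp_all add: h_def)
    qed
    then show ?thesis
      unfolding E_def using INF_meas[OF h] INF_meas[OF g(1)]
      by (intro integral_mono integrable_arctan_ereal) auto
  qed
  then have "E h \<le> I"
    using g(2) by (intro le_if_less_plus_inverse_Suc) (rule le_less_trans)
  moreover have "I \<le> E f" if "range f \<subseteq> S" for f :: "nat \<Rightarrow> 'a \<Rightarrow> ereal"
    unfolding I_def using that by (intro cINF_lower bdd) simp
  ultimately show ?thesis
    using h unfolding E_def by (meson order_trans)
qed

lemma ex_is_essinf:
  assumes "prob_space M" "subalgebra M G" "S \<subseteq> borel_measurable G"
  shows "\<exists>Y \<in> borel_measurable G. is_essinf M S Y"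
proof (cases "S = {}")
  case True
  then show ?thesis
    by (intro bexI[of _ "\<lambda>_. \<infinity>"]) (auto simp: is_essinf_def)
next
  case False
  interpret prob_space M by fact
  have GM: "borel_measurable G \<subseteq> borel_measurable M"
    using measurable_from_subalg[OF assms(2)] by blast
  obtain h :: "nat \<Rightarrow> 'a \<Rightarrow> ereal" where h: "range h \<subseteq> S"
    and min: "\<And>f :: nat \<Rightarrow> 'a \<Rightarrow> ereal. range f \<subseteq> S \<Longrightarrow>
      (\<integral>\<omega>. arctan_ereal (INF n. h n \<omega>) \<partial>M) \<le> (\<integral>\<omega>. arctan_ereal (INF n. f n \<omega>) \<partial>M)"
    using ex_INF_minimizing_sequence[OF False] assms(3) GM by blast
  define Y where "Y \<omega> = (INF n. h n \<omega>)" for \<omega>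
  have YG: "Y \<in> borel_measurable G"
    unfolding Y_def using h assms(3) by (intro borel_measurable_INF) (auto intro: countableI_type)
  with GM have [measurable]: "Y \<in> borel_measurable M"
    by blast
  have "AE \<omega> in M. Y \<omega> \<le> Z \<omega>" if Z: "Z \<in> S" for Z
  proof -
    have [measurable]: "Z \<in> borel_measurable M"
      using Z assms(3) GM by blast
    \<comment> \<open>adjoining \<open>Z\<close> to the minimizing sequence cannot decrease the expectation\<close>
    have INF_eq: "(INF n. case_nat Z h n \<omega>) = min (Z \<omega>) (Y \<omega>)" for \<omega>
      unfolding Y_def by (subst UNIV_nat_eq) (simp add: image_comp inf_min)
    have "(\<integral>\<omega>. arctan_ereal (Y \<omega>) \<partial>M) \<le> (\<integral>\<omega>. arctan_ereal (min (Z \<omega>) (Y \<omega>)) \<partial>M)"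
      using min[of "case_nat Z h"] h Z unfolding INF_eq Y_def by (force split: nat.split)
    then have "AE \<omega> in M. min (Z \<omega>) (Y \<omega>) = Y \<omega>"
      by (intro AE_eq_if_AE_le_integral_arctan_ereal_le) auto
    then show ?thesis
      by eventually_elim (metis min.absorb_iff2)
  qed
  moreover have "AE \<omega> in M. W \<omega> \<le> Y \<omega>" if "\<forall>Z\<in>S. AE \<omega> in M. W \<omega> \<le> Z \<omega>" for W
  proof -
    have "AE \<omega> in M. \<forall>n. W \<omega> \<le> h n \<omega>"
      using that h by (auto simp: AE_all_countable)
    then show ?thesis
      unfolding Y_def by eventually_elim (auto intro: INF_greatest)
  qed
  ultimately have "is_essinf M S Y"
    unfolding is_essinf_def using \<open>Y \<in> borel_measurable M\<close> by blast
  with YG show ?thesis by blast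
qed

lemma is_essinf_AE_unique:
  assumes "is_essinf M S Y" "is_essinf M S Y'"
  shows "AE \<omega> in M. Y \<omega> = Y' \<omega>"
proof -
  have "AE \<omega> in M. Y \<omega> \<le> Y' \<omega>" "AE \<omega> in M. Y' \<omega> \<le> Y \<omega>"
    using assms unfolding is_essinf_def by blast+
  then show ?thesis
    by eventually_elim simp
qed

lemma is_essinf_essinf:
  assumes "prob_space M" "subalgebra M G" "S \<subseteq> borel_measurable G"
  shows "is_essinf M S (essinf M S)"
  unfolding essinf_def using ex_is_essinf[OF assms] by (metis someI_ex)

lemma (in prob_space) is_essinf_ereal_nonempty:
  assumes "is_essinf M S (\<lambda>\<omega>. ereal (g \<omega>))"
  shows "S \<noteq> {}"
proof
  assume "S = {}"
  with assms have "\<forall>W\<in>borel_measurable M. AE \<omega> in M. W \<omega> \<le> ereal (g \<omega>)"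
    unfolding is_essinf_def by blast
  then have "AE \<omega> in M. \<infinity> \<le> ereal (g \<omega>)"
    by (rule bspec) simp
  then show False
    by simp
qed

lemma is_essinf_AE_eq_least:
  assumes "is_essinf M (f ` I) Y" "x \<in> I" "f x \<in> borel_measurable M"
    and "\<And>i. i \<in> I \<Longrightarrow> AE \<omega> in M. f x \<omega> \<le> f i \<omega>"
  shows "AE \<omega> in M. Y \<omega> = f x \<omega>"
proof -
  have "AE \<omega> in M. Y \<omega> \<le> f x \<omega>" "AE \<omega> in M. f x \<omega> \<le> Y \<omega>"
    using assms unfolding is_essinf_def by auto
  then show ?thesis
    by eventually_elim simp
qed

lemma AE_LIMSEQ_if_summable_nn_integral:
  fixes f :: "nat \<Rightarrow> 'a \<Rightarrow> real"
  assumes [measurable]: "\<And>k. f k \<in> borel_measurable M" "g \<in> borel_measurable M"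
    and summable: "(\<Sum>k. \<integral>\<^sup>+\<omega>. ennreal \<bar>f k \<omega> - g \<omega>\<bar> \<partial>M) < \<infinity>"
  shows "AE \<omega> in M. (\<lambda>k. f k \<omega>) \<longlonglongrightarrow> g \<omega>"
proof -
  have "(\<integral>\<^sup>+\<omega>. (\<Sum>k. ennreal \<bar>f k \<omega> - g \<omega>\<bar>) \<partial>M) \<noteq> \<infinity>"
    using summable by (subst nn_integral_suminf) auto
  then have "AE \<omega> in M. (\<Sum>k. ennreal \<bar>f k \<omega> - g \<omega>\<bar>) \<noteq> \<infinity>"
    by (intro nn_integral_PInf_AE) auto
  then show ?thesis
  proof eventually_elim
    case (elim \<omega>)
    then have "summable (\<lambda>k. \<bar>f k \<omega> - g \<omega>\<bar>)"
      by (intro summable_suminf_not_top) auto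
    then have "(\<lambda>k. \<bar>f k \<omega> - g \<omega>\<bar>) \<longlonglongrightarrow> 0"
      by (rule summable_LIMSEQ_zero)
    then have "(\<lambda>k. f k \<omega> - g \<omega>) \<longlonglongrightarrow> 0"
      by (simp add: tendsto_rabs_zero_iff)
    then show ?case
      by (simp add: LIM_zero_iff)
  qed
qed

lemma ereal_le_limit_add:
  fixes v :: ereal
  assumes "f \<longlonglongrightarrow> x" "g \<longlonglongrightarrow> y" "\<And>k. n \<le> k \<Longrightarrow> v \<le> ereal (f k) + ereal (g k)"
  shows "v \<le> ereal (x + y)"
proof (rule LIMSEQ_le_const)
  show "(\<lambda>k. ereal (f k + g k)) \<longlonglongrightarrow> ereal (x + y)"
    using assms(1,2) by (simp add: tendsto_add)
  show "\<exists>N. \<forall>k\<ge>N. v \<le> ereal (f k + g k)"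
    using assms(3) by auto
qed

lemma ex_strict_mono_diagonal:
  fixes P :: "nat \<Rightarrow> nat \<Rightarrow> bool"
  assumes "\<And>k N. \<exists>n\<ge>N. P k n"
  shows "\<exists>r. strict_mono r \<and> (\<forall>k. P k (r k))"
proof -
  have "\<forall>k N. \<exists>n. n \<ge> N \<and> P k n"
    using assms by blast
  then obtain next_index where next_index: "\<And>k N. next_index k N \<ge> N \<and> P k (next_index k N)"
    by metis
  define r where "r = rec_nat (next_index 0 0) (\<lambda>k rk. next_index (Suc k) (Suc rk))"
  have r_0: "r 0 = next_index 0 0" and r_Suc: "r (Suc k) = next_index (Suc k) (Suc (r k))" for k
    by (simp_all add: r_def)
  have "strict_mono r"
    unfolding strict_mono_Suc_iff using next_index r_Suc by (metis Suc_le_lessD)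
  moreover have "P k (r k)" for k
    using next_index by (cases k) (simp_all add: r_0 r_Suc)
  ultimately show ?thesis
    by blast
qed

lemma ex_AE_incseq_majorant:
  fixes f :: "'i \<Rightarrow> 'a \<Rightarrow> 'b::preorder" and a :: "nat \<Rightarrow> 'i"
  assumes directed: "\<And>i j. i \<in> I \<Longrightarrow> j \<in> I \<Longrightarrow>
      \<exists>k\<in>I. (AE \<omega> in M. f i \<omega> \<le> f k \<omega>) \<and> (AE \<omega> in M. f j \<omega> \<le> f k \<omega>)"
    and a: "range a \<subseteq> I"
  shows "\<exists>b. range b \<subseteq> I \<and> (\<forall>n. AE \<omega> in M. f (a n) \<omega> \<le> f (b n) \<omega>) \<and>
           (\<forall>n m. n \<le> m \<longrightarrow> (AE \<omega> in M. f (b n) \<omega> \<le> f (b m) \<omega>))"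
proof -
  obtain up where up: "\<And>i j. i \<in> I \<Longrightarrow> j \<in> I \<Longrightarrow> up i j \<in> I \<and>
      (AE \<omega> in M. f i \<omega> \<le> f (up i j) \<omega>) \<and> (AE \<omega> in M. f j \<omega> \<le> f (up i j) \<omega>)"
    using directed by metis
  define b where "b = rec_nat (a 0) (\<lambda>n bn. up bn (a (Suc n)))"
  have b_0: "b 0 = a 0" and b_Suc: "b (Suc n) = up (b n) (a (Suc n))" for n
    by (simp_all add: b_def)
  have b: "b n \<in> I" for n
    using a up by (induction n) (auto simp: b_0 b_Suc)
  have "AE \<omega> in M. f (a n) \<omega> \<le> f (b n) \<omega>" for n
  proof (cases n)
    case (Suc m)
    with up[OF b, of "a (Suc m)" m] a show ?thesis
      by (auto simp: b_Suc)
  qed (simp add: b_0)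
  moreover have "AE \<omega> in M. f (b n) \<omega> \<le> f (b m) \<omega>" if "n \<le> m" for n m
    using that
  proof (induction m rule: dec_induct)
    case (step m)
    have "AE \<omega> in M. f (b m) \<omega> \<le> f (b (Suc m)) \<omega>"
      using up[OF b, of "a (Suc m)" m] a by (auto simp: b_Suc)
    with step.IH show ?case
      by eventually_elim (rule order_trans)
  qed simp
  ultimately show ?thesis
    using b by blast
qed

lemma (in prob_space) AE_greatest_if_directed_maximizes_integral:
  fixes f :: "'i \<Rightarrow> 'a \<Rightarrow> ereal"
  assumes meas: "\<And>i. i \<in> I \<Longrightarrow> f i \<in> borel_measurable M"
    and directed: "\<And>i j. i \<in> I \<Longrightarrow> j \<in> I \<Longrightarrow>
      \<exists>k\<in>I. (AE \<omega> in M. f i \<omega> \<le> f k \<omega>) \<and> (AE \<omega> in M. f j \<omega> \<le> f k \<omega>)"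
    and x: "x \<in> I"
    and max: "\<And>i. i \<in> I \<Longrightarrow> (\<integral>\<omega>. arctan_ereal (f i \<omega>) \<partial>M) \<le> (\<integral>\<omega>. arctan_ereal (f x \<omega>) \<partial>M)"
    and i: "i \<in> I"
  shows "AE \<omega> in M. f i \<omega> \<le> f x \<omega>"
proof -
  obtain k where k: "k \<in> I" "AE \<omega> in M. f i \<omega> \<le> f k \<omega>" "AE \<omega> in M. f x \<omega> \<le> f k \<omega>"
    using directed[OF i x] by blast
  have "AE \<omega> in M. f x \<omega> = f k \<omega>"
    using meas[OF x] meas[OF k(1)] k(3) max[OF k(1)] by (rule AE_eq_if_AE_le_integral_arctan_ereal_le)
  with k(2) show ?thesis
    by eventually_elim simp
qed

section \<open>The pseudometric of \<open>A\<^sup>1\<close>\<close>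

definition A1dist :: "'a measure \<Rightarrow> 'a proc \<Rightarrow> 'a proc \<Rightarrow> ennreal" where
  "A1dist M a b = A1norm M (\<lambda>t \<omega>. a t \<omega> - b t \<omega>)"

lemma dlt_diff: "dlt (\<lambda>t \<omega>. a t \<omega> - b t \<omega>) t \<omega> = dlt a t \<omega> - dlt b t \<omega>"
  by (simp add: dlt_def prev_def)

lemma measurable_dlt [measurable]:
  "(\<And>t. a t \<in> borel_measurable M) \<Longrightarrow> dlt a t \<in> borel_measurable M"
  unfolding dlt_def prev_def by (cases t) auto

lemma A1dist_self [simp]: "A1dist M a a = 0"
  by (simp add: A1dist_def A1norm_def dlt_def prev_def)

lemma A1dist_triangle:
  assumes [measurable]: "\<And>t. x t \<in> borel_measurable M" "\<And>t. y t \<in> borel_measurable M"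
    "\<And>t. z t \<in> borel_measurable M"
  shows "A1dist M z x \<le> A1dist M z y + A1dist M y x"
proof -
  have "(\<Sum>t. ennreal \<bar>dlt z t \<omega> - dlt x t \<omega>\<bar>)
      \<le> (\<Sum>t. ennreal \<bar>dlt z t \<omega> - dlt y t \<omega>\<bar> + ennreal \<bar>dlt y t \<omega> - dlt x t \<omega>\<bar>)" for \<omega>
    by (intro suminf_le) (auto simp flip: ennreal_plus)
  also have "\<dots> \<omega> = (\<Sum>t. ennreal \<bar>dlt z t \<omega> - dlt y t \<omega>\<bar>) + (\<Sum>t. ennreal \<bar>dlt y t \<omega> - dlt x t \<omega>\<bar>)" for \<omega>
    by (rule suminf_add[symmetric]) auto
  finally show ?thesis
    unfolding A1dist_def A1norm_def dlt_diff
    by (subst nn_integral_add[symmetric]) (auto intro!: nn_integral_mono)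
qed

locale filtered_prob_space = prob_space M + filtration "space M" F
  for M :: "'a measure" and F :: "nat \<Rightarrow> 'a measure" +
  assumes subalgebra_F: "\<And>t. subalgebra M (F t)"
begin

lemma measurable_adapted: "adapted F X \<Longrightarrow> X t \<in> borel_measurable M"
  unfolding adapted_def using measurable_from_subalg[OF subalgebra_F] by blast

lemma measurable_A1: "a \<in> A1 M F \<Longrightarrow> a t \<in> borel_measurable M"
  unfolding A1_def using measurable_adapted by blast

lemma A1_open_A1_ball:
  assumes x: "x \<in> A1 M F"
  shows "A1_open M F {y \<in> A1 M F. A1dist M y x < ennreal e}"
  unfolding A1_open_def A1dist_def[symmetric]
proof (intro conjI ballI)
  fix y assume "y \<in> {y \<in> A1 M F. A1dist M y x < ennreal e}"
  then have y: "y \<in> A1 M F" and "A1dist M y x < ennreal e"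
    by auto
  then obtain r where r: "A1dist M y x = ennreal r" "0 \<le> r" "r < e"
    by (cases "A1dist M y x" rule: ennreal_cases) (auto simp: ennreal_less_iff)
  show "\<exists>d>0. \<forall>z\<in>A1 M F. A1dist M z y < ennreal d \<longrightarrow> z \<in> {y \<in> A1 M F. A1dist M y x < ennreal e}"
  proof (intro exI[of _ "e - r"] conjI ballI impI)
    fix z assume z: "z \<in> A1 M F" and "A1dist M z y < ennreal (e - r)"
    then obtain q where q: "A1dist M z y = ennreal q" "0 \<le> q" "q < e - r"
      by (cases "A1dist M z y" rule: ennreal_cases) (auto simp: ennreal_less_iff)
    have "A1dist M z x \<le> A1dist M z y + A1dist M y x"
      using measurable_A1 x y z by (intro A1dist_triangle) auto
    also have "\<dots> = ennreal (q + r)"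
      using q r by (simp add: ennreal_plus)
    also have "\<dots> < ennreal e"
      using q r by (intro ennreal_lessI) auto
    finally show "z \<in> {y \<in> A1 M F. A1dist M y x < ennreal e}"
      using z by simp
  qed (use r in simp)
qed auto

lemma A1_compact_cluster_point:
  fixes b :: "nat \<Rightarrow> 'a proc"
  assumes K: "A1_compact M F K" and b: "range b \<subseteq> K"
  shows "\<exists>x\<in>K. \<forall>e>0. \<forall>N. \<exists>n\<ge>N. A1dist M (b n) x < ennreal e"
proof (rule ccontr)
  assume "\<not> ?thesis"
  then obtain e N where eN: "\<And>x. x \<in> K \<Longrightarrow> e x > 0 \<and> (\<forall>n\<ge>N x. \<not> A1dist M (b n) x < ennreal (e x))"
    by metis
  have KA1: "K \<subseteq> A1 M F"
    using K by (simp add: A1_compact_def)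
  define ball where "ball x = {y \<in> A1 M F. A1dist M y x < ennreal (e x)}" for x
  have "\<forall>U\<in>ball ` K. A1_open M F U"
    using A1_open_A1_ball KA1 by (auto simp: ball_def)
  moreover have "K \<subseteq> \<Union>(ball ` K)"
    using KA1 eN by (force simp: ball_def)
  ultimately obtain V where V: "V \<subseteq> ball ` K" "finite V" "K \<subseteq> \<Union>V"
    using K unfolding A1_compact_def by meson
  then obtain C where C: "C \<subseteq> K" "finite C" "V = ball ` C"
    by (meson finite_subset_image)
  define n where "n = (\<Sum>x\<in>C. N x)"
  obtain x where x: "x \<in> C" "b n \<in> ball x"
    using V(3) b C(3) by blast
  have "N x \<le> n"
    unfolding n_def using C(2) x(1) by (intro member_le_sum) auto
  with eN[of x] x C(1) show False
    by (auto simp: ball_def)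
qed

lemma A1_compact_fast_convergent_subseq:
  fixes b :: "nat \<Rightarrow> 'a proc"
  assumes K: "A1_compact M F K" and b: "range b \<subseteq> K"
  shows "\<exists>x\<in>K. \<exists>r. strict_mono r \<and> (\<forall>k. A1dist M (b (r k)) x < ennreal ((1/2)^k))"
proof -
  obtain x where x: "x \<in> K" "\<And>e N. e > 0 \<Longrightarrow> \<exists>n\<ge>N. A1dist M (b n) x < ennreal e"
    using A1_compact_cluster_point[OF assms] by blast
  have "\<exists>n\<ge>N. A1dist M (b n) x < ennreal ((1/2)^k)" for k N
    by (rule x(2)) simp
  then obtain r where "strict_mono r" "\<forall>k. A1dist M (b (r k)) x < ennreal ((1/2)^k)"
    using ex_strict_mono_diagonal[where P = "\<lambda>k n. A1dist M (b n) x < ennreal ((1/2)^k)"]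
    by blast
  with x(1) show ?thesis
    by blast
qed

end

section \<open>Pairings, penalties and concatenation\<close>

lemma RsT_bounded:
  assumes "X \<in> RsT M F s T"
  shows "\<exists>c\<ge>0. AE \<omega> in M. \<forall>t. \<bar>X t \<omega>\<bar> \<le> c"
proof -
  obtain X' c where X: "X = pist s T X'" and c: "\<And>t. AE \<omega> in M. \<bar>X' t \<omega>\<bar> \<le> c"
    using assms by (auto simp: RsT_def Rinf_def)
  have "AE \<omega> in M. \<forall>t. \<bar>X' t \<omega>\<bar> \<le> c"
    using c by (simp add: AE_all_countable)
  then have "AE \<omega> in M. \<forall>t. \<bar>X t \<omega>\<bar> \<le> max c 0"
    by eventually_elim (auto simp: X pist_def le_max_iff_disj)
  then show ?thesis
    by (intro exI[of _ "max c 0"]) auto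
qed

lemma RsT_uminus:
  assumes "X \<in> RsT M F s T"
  shows "(\<lambda>t \<omega>. - X t \<omega>) \<in> RsT M F s T"
proof -
  obtain X' where X: "X = pist s T X'" "X' \<in> Rinf M F"
    using assms by (auto simp: RsT_def)
  then have "(\<lambda>t \<omega>. - X' t \<omega>) \<in> Rinf M F"
    by (auto simp: Rinf_def adapted_def)
  moreover have "(\<lambda>t \<omega>. - X t \<omega>) = pist s T (\<lambda>t \<omega>. - X' t \<omega>)"
    by (auto simp: X pist_def fun_eq_iff)
  ultimately show ?thesis
    by (auto simp: RsT_def)
qed

lemma DsT_eq_0_before:
  assumes "a \<in> DsT M F s T" "t < s"
  shows "a t \<omega> = 0"
  using assms by (auto simp: DsT_def pist_def)

lemma dlt_DsT_eq_0_outside: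
  assumes "a \<in> DsT M F s T" "s \<le> T" "t < s \<or> T < t"
  shows "dlt a t \<omega> = 0"
proof -
  obtain a' where a: "a = pist s T a'"
    using assms(1) by (auto simp: DsT_def)
  from assms(3) consider "t < s" | "T < t"
    by blast
  then show ?thesis
  proof cases
    case 2
    then have "min t T = T" "min (t - 1) T = T" "s \<le> t - 1"
      using assms(2) by auto
    with 2 show ?thesis
      by (simp add: a pist_def dlt_def prev_def)
  qed (simp add: a pist_def dlt_def prev_def)
qed

lemma real_cond_exp_cong_sets:
  assumes "space G = space G'" "sets G = sets G'"
  shows "real_cond_exp M G = real_cond_exp M G'"
  unfolding real_cond_exp_def nn_cond_exp_def restr_to_subalg_def subalgebra_def
  by (simp only: assms)

context filtered_prob_space
begin

lemma measurable_RsT: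
  assumes "X \<in> RsT M F s T"
  shows "X t \<in> borel_measurable M"
proof -
  obtain X' where "X = pist s T X'" "adapted F X'"
    using assms by (auto simp: RsT_def Rinf_def)
  then show ?thesis
    using measurable_adapted by (cases "s \<le> t") (auto simp: pist_def)
qed

lemma integrable_dlt:
  assumes "a \<in> A1 M F"
  shows "integrable M (dlt a t)"
proof (rule integrableI_bounded)
  have [measurable]: "\<And>t. a t \<in> borel_measurable M"
    using measurable_A1 assms by auto
  show "dlt a t \<in> borel_measurable M"
    by measurable
  have "(\<integral>\<^sup>+ \<omega>. ennreal (norm (dlt a t \<omega>)) \<partial>M) \<le> A1norm M a"
    unfolding A1norm_def
  proof (rule nn_integral_mono)
    fix \<omega>
    have "(\<Sum>t\<in>{t}. ennreal \<bar>dlt a t \<omega>\<bar>) \<le> (\<Sum>t. ennreal \<bar>dlt a t \<omega>\<bar>)"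
      by (intro sum_le_suminf) auto
    then show "ennreal (norm (dlt a t \<omega>)) \<le> (\<Sum>t. ennreal \<bar>dlt a t \<omega>\<bar>)"
      by simp
  qed
  also have "\<dots> < \<infinity>"
    using assms by (simp add: A1_def)
  finally show "(\<integral>\<^sup>+ \<omega>. ennreal (norm (dlt a t \<omega>)) \<partial>M) < \<infinity>" .
qed

lemma integrable_pairing_sum:
  assumes X: "X \<in> RsT M F s T" and a: "a \<in> A1 M F"
  shows "integrable M (\<lambda>\<omega>. \<Sum>t\<in>{s..T}. X t \<omega> * dlt a t \<omega>)"
proof (rule Bochner_Integration.integrable_sum)
  fix t
  obtain c where c: "c \<ge> 0" "AE \<omega> in M. \<forall>t. \<bar>X t \<omega>\<bar> \<le> c"
    using RsT_bounded[OF X] by blast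
  have [measurable]: "\<And>t. a t \<in> borel_measurable M" "\<And>t. X t \<in> borel_measurable M"
    using measurable_A1[OF a] measurable_RsT[OF X] by auto
  show "integrable M (\<lambda>\<omega>. X t \<omega> * dlt a t \<omega>)"
  proof (rule Bochner_Integration.integrable_bound)
    show "integrable M (\<lambda>\<omega>. c * dlt a t \<omega>)"
      using integrable_dlt[OF a] by simp
    show "AE \<omega> in M. norm (X t \<omega> * dlt a t \<omega>) \<le> norm (c * dlt a t \<omega>)"
      using c(2) by eventually_elim (use c(1) in \<open>auto simp: abs_mult intro: mult_right_mono\<close>)
  qed measurable
qed

lemma sets_pre_sigma_const: "sets (pre_sigma (\<lambda>_. s)) = sets (F s)"
proof -
  have "{A. \<forall>t. {\<omega>\<in>A. s \<le> t} \<in> sets (F t)} = sets (F s)"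
  proof safe
    fix A assume "\<forall>t. {\<omega>\<in>A. s \<le> t} \<in> sets (F t)"
    then have "{\<omega>\<in>A. s \<le> s} \<in> sets (F s)"
      by blast
    then show "A \<in> sets (F s)"
      by simp
  next
    fix A t assume "A \<in> sets (F s)"
    then show "{\<omega>\<in>A. s \<le> t} \<in> sets (F t)"
      using sets_F_mono[of s t] by (cases "s \<le> t") auto
  qed
  then show ?thesis
    by (rule trans[OF sets_pre_sigma[OF stopping_time_const]])
qed

lemma mass_from_const_eq_pairing:
  assumes a: "a \<in> DsT M F s T" and "s \<le> T"
  shows "mass_from M F (\<lambda>_. s) a = pairing M F s T (\<lambda>_ _. 1) a"
proof -
  have "(\<Sum>t. if s \<le> t then dlt a t \<omega> else 0) = (\<Sum>t\<in>{s..T}. if s \<le> t then dlt a t \<omega> else 0)" for \<omega>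
    by (rule suminf_finite) (auto intro: dlt_DsT_eq_0_outside[OF a \<open>s \<le> T\<close>])
  then have sum_eq: "(\<lambda>\<omega>. \<Sum>t. if s \<le> t then dlt a t \<omega> else 0) = (\<lambda>\<omega>. \<Sum>t\<in>{s..T}. 1 * dlt a t \<omega>)"
    by (intro ext) simp
  have "real_cond_exp M (pre_sigma (\<lambda>_. s)) = real_cond_exp M (F s)"
    by (rule real_cond_exp_cong_sets) (simp_all add: sets_pre_sigma_const space_pre_sigma space_F)
  then show ?thesis
    unfolding mass_from_def pairing_def sum_eq by (simp only:)
qed

lemma concat_const_AE_eq:
  assumes a: "a \<in> DsT M F s T" and b: "b \<in> DsT M F s T" and "s \<le> T"
  shows "AE \<omega> in M. \<forall>t. concat M F a b (\<lambda>_. s) A t \<omega> = (if \<omega> \<in> A then b t \<omega> else a t \<omega>)"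
proof -
  have "AE \<omega> in M. pairing M F s T (\<lambda>_ _. 1) a \<omega> = 1" "AE \<omega> in M. pairing M F s T (\<lambda>_ _. 1) b \<omega> = 1"
    using a b by (simp_all add: DsT_def)
  then have "AE \<omega> in M. mass_from M F (\<lambda>_. s) a \<omega> = 1 \<and> mass_from M F (\<lambda>_. s) b \<omega> = 1"
    unfolding mass_from_const_eq_pairing[OF a \<open>s \<le> T\<close>] mass_from_const_eq_pairing[OF b \<open>s \<le> T\<close>]
    by eventually_elim simp
  then show ?thesis
  proof eventually_elim
    case (elim \<omega>)
    have prev: "prev a s \<omega> = 0" "prev b s \<omega> = 0"
      using DsT_eq_0_before[OF a] DsT_eq_0_before[OF b] by (simp_all add: prev_def)
    show ?case
    proof
      fix t
      show "concat M F a b (\<lambda>_. s) A t \<omega> = (if \<omega> \<in> A then b t \<omega> else a t \<omega>)"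
      proof (cases "t < s")
        case True
        then show ?thesis
          using DsT_eq_0_before[OF a True] DsT_eq_0_before[OF b True] by (simp add: concat_def)
      next
        case False
        then show ?thesis
          using elim prev by (simp add: concat_def)
      qed
    qed
  qed
qed

end

lemma ereal_minus_eq_uminus_add: "ereal (- p) - q = - (ereal p + q)"
  by (cases q) auto

locale stable_compact_dual_set = filtered_prob_space M F for M F +
  fixes s T :: nat and \<phi> :: "'a proc \<Rightarrow> 'a \<Rightarrow> real" and \<M> :: "'a proc set"
  assumes s_le_T: "s \<le> T"
    and dual_subset_DsT: "\<M> \<subseteq> DsT M F s T"
    and A1_compact_dual: "A1_compact M F \<M>"
    and stable_concat_dual: "stable_concat M F \<M>"
begin

sublocale Fs: sigma_finite_subalgebra M "F s"
  by (rule finite_measure_subalgebra_is_sigma_finite)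
    (simp add: finite_measure_subalgebra_def finite_measure_subalgebra_axioms_def subalgebra_F
      finite_measure_axioms)

abbreviation pair :: "'a proc \<Rightarrow> 'a proc \<Rightarrow> 'a \<Rightarrow> real" where
  "pair X a \<equiv> pairing M F s T X a"

abbreviation penalty :: "'a proc \<Rightarrow> 'a \<Rightarrow> ereal" where
  "penalty a \<equiv> phi_sharp M F s T \<phi> a"

abbreviation penalized_pair :: "'a proc \<Rightarrow> 'a proc \<Rightarrow> 'a \<Rightarrow> ereal" where
  "penalized_pair X a \<omega> \<equiv> ereal (pair X a \<omega>) + penalty a \<omega>"

lemma dual_A1: "a \<in> \<M> \<Longrightarrow> a \<in> A1 M F"
  using A1_compact_dual by (auto simp: A1_compact_def)

lemma dual_DsT: "a \<in> \<M> \<Longrightarrow> a \<in> DsT M F s T"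
  using dual_subset_DsT by auto

lemma measurable_pair_Fs [measurable]: "pair X a \<in> borel_measurable (F s)"
  by (simp add: pairing_def)

lemma measurable_pair [measurable]: "pair X a \<in> borel_measurable M"
  by (simp add: pairing_def)

lemma pair_uminus:
  assumes "X \<in> RsT M F s T" "a \<in> A1 M F"
  shows "AE \<omega> in M. pair (\<lambda>t \<omega>. - X t \<omega>) a \<omega> = - pair X a \<omega>"
proof -
  have "(\<lambda>\<omega>. \<Sum>t\<in>{s..T}. - X t \<omega> * dlt a t \<omega>) = (\<lambda>\<omega>. -1 * (\<Sum>t\<in>{s..T}. X t \<omega> * dlt a t \<omega>))"
    by (simp add: sum_negf)
  then show ?thesis
    unfolding pairing_def using Fs.real_cond_exp_cmult[OF integrable_pairing_sum[OF assms], of "-1"]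
    by simp
qed

lemma nn_integral_pair_diff_le:
  assumes X: "X \<in> RsT M F s T" and c: "0 \<le> c" "AE \<omega> in M. \<forall>t. \<bar>X t \<omega>\<bar> \<le> c"
    and a: "a \<in> A1 M F" and b: "b \<in> A1 M F"
  shows "(\<integral>\<^sup>+\<omega>. ennreal \<bar>pair X a \<omega> - pair X b \<omega>\<bar> \<partial>M) \<le> ennreal c * A1dist M a b"
proof -
  have [measurable]: "\<And>t. a t \<in> borel_measurable M" "\<And>t. b t \<in> borel_measurable M"
    "\<And>t. X t \<in> borel_measurable M"
    using measurable_A1[OF a] measurable_A1[OF b] measurable_RsT[OF X] by auto
  define h where "h = (\<lambda>\<omega>. (\<Sum>t\<in>{s..T}. X t \<omega> * dlt a t \<omega>) - (\<Sum>t\<in>{s..T}. X t \<omega> * dlt b t \<omega>))"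
  have h_meas [measurable]: "h \<in> borel_measurable M"
    unfolding h_def by measurable
  have "AE \<omega> in M. pair X a \<omega> - pair X b \<omega> = real_cond_exp M (F s) h \<omega>"
    using Fs.real_cond_exp_diff[OF integrable_pairing_sum[OF X a] integrable_pairing_sum[OF X b]]
    unfolding pairing_def h_def by eventually_elim simp
  with Fs.real_cond_exp_abs[OF h_meas]
  have "AE \<omega> in M. ennreal \<bar>pair X a \<omega> - pair X b \<omega>\<bar> \<le> nn_cond_exp M (F s) (\<lambda>\<omega>. ennreal \<bar>h \<omega>\<bar>) \<omega>"
    by eventually_elim simp
  then have "(\<integral>\<^sup>+\<omega>. ennreal \<bar>pair X a \<omega> - pair X b \<omega>\<bar> \<partial>M)
      \<le> (\<integral>\<^sup>+\<omega>. nn_cond_exp M (F s) (\<lambda>\<omega>. ennreal \<bar>h \<omega>\<bar>) \<omega> \<partial>M)"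
    by (rule nn_integral_mono_AE)
  also have "\<dots> = (\<integral>\<^sup>+\<omega>. ennreal \<bar>h \<omega>\<bar> \<partial>M)"
    using Fs.nn_cond_exp_intg[of "\<lambda>_. 1" "\<lambda>\<omega>. ennreal \<bar>h \<omega>\<bar>"] by simp
  also have "\<dots> \<le> (\<integral>\<^sup>+\<omega>. ennreal c * (\<Sum>t. ennreal \<bar>dlt (\<lambda>t \<omega>. a t \<omega> - b t \<omega>) t \<omega>\<bar>) \<partial>M)"
  proof (rule nn_integral_mono_AE)
    show "AE \<omega> in M. ennreal \<bar>h \<omega>\<bar> \<le> ennreal c * (\<Sum>t. ennreal \<bar>dlt (\<lambda>t \<omega>. a t \<omega> - b t \<omega>) t \<omega>\<bar>)"
      using c(2)
    proof eventually_elim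
      case (elim \<omega>)
      have "\<bar>h \<omega>\<bar> \<le> (\<Sum>t\<in>{s..T}. \<bar>X t \<omega> * (dlt a t \<omega> - dlt b t \<omega>)\<bar>)"
        unfolding h_def by (simp add: sum_subtractf[symmetric] right_diff_distrib sum_abs)
      also have "\<dots> \<le> (\<Sum>t\<in>{s..T}. c * \<bar>dlt a t \<omega> - dlt b t \<omega>\<bar>)"
        using elim c(1) by (intro sum_mono) (auto simp: abs_mult intro: mult_right_mono)
      finally have "ennreal \<bar>h \<omega>\<bar> \<le> ennreal (c * (\<Sum>t\<in>{s..T}. \<bar>dlt a t \<omega> - dlt b t \<omega>\<bar>))"
        by (simp add: ennreal_leI sum_distrib_left)
      also have "\<dots> = ennreal c * (\<Sum>t\<in>{s..T}. ennreal \<bar>dlt a t \<omega> - dlt b t \<omega>\<bar>)"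
        using c(1) by (simp add: ennreal_mult sum_nonneg)
      also have "\<dots> \<le> ennreal c * (\<Sum>t. ennreal \<bar>dlt a t \<omega> - dlt b t \<omega>\<bar>)"
        by (intro mult_left_mono sum_le_suminf) auto
      finally show ?case
        by (simp add: dlt_diff)
    qed
  qed
  also have "\<dots> = ennreal c * A1dist M a b"
    unfolding A1dist_def A1norm_def by (rule nn_integral_cmult) measurable
  finally show ?thesis .
qed

lemma AE_LIMSEQ_pair:
  fixes b :: "nat \<Rightarrow> 'a proc"
  assumes X: "X \<in> RsT M F s T" and b: "range b \<subseteq> A1 M F" and x: "x \<in> A1 M F"
    and fast: "\<And>k. A1dist M (b k) x < ennreal ((1/2)^k)"
  shows "AE \<omega> in M. (\<lambda>k. pair X (b k) \<omega>) \<longlonglongrightarrow> pair X x \<omega>"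
proof (rule AE_LIMSEQ_if_summable_nn_integral)
  obtain c where c: "0 \<le> c" "AE \<omega> in M. \<forall>t. \<bar>X t \<omega>\<bar> \<le> c"
    using RsT_bounded[OF X] by blast
  have "(\<Sum>k. \<integral>\<^sup>+\<omega>. ennreal \<bar>pair X (b k) \<omega> - pair X x \<omega>\<bar> \<partial>M) \<le> (\<Sum>k. ennreal (c * (1/2)^k))"
  proof (intro suminf_le allI)
    fix k
    have "(\<integral>\<^sup>+\<omega>. ennreal \<bar>pair X (b k) \<omega> - pair X x \<omega>\<bar> \<partial>M) \<le> ennreal c * A1dist M (b k) x"
      using b x by (intro nn_integral_pair_diff_le[OF X c]) auto
    also have "\<dots> \<le> ennreal c * ennreal ((1/2)^k)"
      using fast[of k] by (intro mult_left_mono) auto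
    finally show "(\<integral>\<^sup>+\<omega>. ennreal \<bar>pair X (b k) \<omega> - pair X x \<omega>\<bar> \<partial>M) \<le> ennreal (c * (1/2)^k)"
      using c(1) by (simp add: ennreal_mult)
  qed auto
  also have "\<dots> = ennreal (\<Sum>k. c * (1/2)^k)"
    using c(1) by (intro suminf_ennreal2) (auto intro!: summable_mult summable_geometric)
  finally show "(\<Sum>k. \<integral>\<^sup>+\<omega>. ennreal \<bar>pair X (b k) \<omega> - pair X x \<omega>\<bar> \<partial>M) < \<infinity>"
    by (simp add: le_less_trans)
qed simp_all

lemma pair_paste:
  assumes Y: "Y \<in> RsT M F s T" and a1: "a1 \<in> A1 M F" and a2: "a2 \<in> A1 M F" and c: "c \<in> A1 M F"
    and A: "A \<in> sets (F s)"
    and paste: "AE \<omega> in M. \<forall>t. c t \<omega> = (if \<omega> \<in> A then a2 t \<omega> else a1 t \<omega>)"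
  shows "AE \<omega> in M. pair Y c \<omega> = (if \<omega> \<in> A then pair Y a2 \<omega> else pair Y a1 \<omega>)"
proof -
  have A_M [measurable]: "A \<in> sets M"
    using A subalgebra_F[of s] by (auto simp: subalgebra_def)
  have A'_Fs: "space M - A \<in> sets (F s)"
    using sets.compl_sets[OF A] space_F[of s] by simp
  define f where "f a \<omega> = (\<Sum>t\<in>{s..T}. Y t \<omega> * dlt a t \<omega>)" for a \<omega>
  have int: "integrable M (f a)" if "a \<in> A1 M F" for a
    unfolding f_def using integrable_pairing_sum[OF Y that] .
  have int1: "integrable M (\<lambda>\<omega>. indicator (space M - A) \<omega> * f a1 \<omega>)"
    using integrable_mult_indicator[OF _ int[OF a1], of "space M - A"] by simp
  have int2: "integrable M (\<lambda>\<omega>. indicator A \<omega> * f a2 \<omega>)"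
    using integrable_mult_indicator[OF A_M int[OF a2]] by simp
  have "AE \<omega> in M. f c \<omega> = indicator A \<omega> * f a2 \<omega> + indicator (space M - A) \<omega> * f a1 \<omega>"
    using paste AE_space
  proof eventually_elim
    case (elim \<omega>)
    then have "dlt c t \<omega> = (if \<omega> \<in> A then dlt a2 t \<omega> else dlt a1 t \<omega>)" for t
      by (simp add: dlt_def prev_def)
    with elim show ?case
      by (simp add: f_def indicator_def)
  qed
  then have "AE \<omega> in M. real_cond_exp M (F s) (f c) \<omega> =
      real_cond_exp M (F s) (\<lambda>\<omega>. indicator A \<omega> * f a2 \<omega> + indicator (space M - A) \<omega> * f a1 \<omega>) \<omega>"
    using int[OF c] int1 int2 by (intro Fs.real_cond_exp_cong) auto
  moreover note Fs.real_cond_exp_add[OF int2 int1]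
  moreover have "AE \<omega> in M. real_cond_exp M (F s) (\<lambda>\<omega>. indicator A \<omega> * f a2 \<omega>) \<omega> =
      indicator A \<omega> * real_cond_exp M (F s) (f a2) \<omega>"
    using A int2 int[OF a2] by (intro Fs.real_cond_exp_mult) auto
  moreover have "AE \<omega> in M. real_cond_exp M (F s) (\<lambda>\<omega>. indicator (space M - A) \<omega> * f a1 \<omega>) \<omega> =
      indicator (space M - A) \<omega> * real_cond_exp M (F s) (f a1) \<omega>"
    using A'_Fs int1 int[OF a1] by (intro Fs.real_cond_exp_mult) auto
  ultimately show ?thesis
    using AE_space unfolding pairing_def f_def[symmetric]
    by eventually_elim (auto simp: indicator_def)
qed

lemma is_essinf_penalty:
  "is_essinf M ((\<lambda>Y \<omega>. ereal (pair Y a \<omega>)) ` acc_set M F s T \<phi>) (penalty a)"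
  unfolding phi_sharp_def by (rule is_essinf_essinf[OF prob_space_axioms subalgebra_F[of s]]) auto

lemma measurable_penalty [measurable]: "penalty a \<in> borel_measurable M"
  using is_essinf_penalty by (simp add: is_essinf_def)

lemma penalty_le_pair: "Y \<in> acc_set M F s T \<phi> \<Longrightarrow> AE \<omega> in M. penalty a \<omega> \<le> ereal (pair Y a \<omega>)"
  using is_essinf_penalty[of a] by (simp add: is_essinf_def)

lemma penalty_greatest:
  assumes "W \<in> borel_measurable M"
    and "\<And>Y. Y \<in> acc_set M F s T \<phi> \<Longrightarrow> AE \<omega> in M. W \<omega> \<le> ereal (pair Y a \<omega>)"
  shows "AE \<omega> in M. W \<omega> \<le> penalty a \<omega>"
  using is_essinf_penalty[of a] assms unfolding is_essinf_def by blast

lemma ex_Fs_measurable_version_penalty: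
  "\<exists>\<Phi>\<in>borel_measurable (F s). AE \<omega> in M. \<Phi> \<omega> = penalty a \<omega>"
proof -
  have "(\<lambda>Y \<omega>. ereal (pair Y a \<omega>)) ` acc_set M F s T \<phi> \<subseteq> borel_measurable (F s)"
    by auto
  then obtain \<Phi> where "\<Phi> \<in> borel_measurable (F s)"
    "is_essinf M ((\<lambda>Y \<omega>. ereal (pair Y a \<omega>)) ` acc_set M F s T \<phi>) \<Phi>"
    using ex_is_essinf[OF prob_space_axioms subalgebra_F[of s]] by blast
  with is_essinf_AE_unique[OF _ is_essinf_penalty] show ?thesis
    by blast
qed

lemma penalty_paste:
  assumes a1: "a1 \<in> A1 M F" and a2: "a2 \<in> A1 M F" and c: "c \<in> A1 M F"
    and A: "A \<in> sets (F s)"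
    and paste: "AE \<omega> in M. \<forall>t. c t \<omega> = (if \<omega> \<in> A then a2 t \<omega> else a1 t \<omega>)"
  shows "AE \<omega> in M. (if \<omega> \<in> A then penalty a2 \<omega> else penalty a1 \<omega>) \<le> penalty c \<omega>"
proof (rule penalty_greatest)
  have [measurable]: "A \<in> sets M"
    using A subalgebra_F[of s] by (auto simp: subalgebra_def)
  show "(\<lambda>\<omega>. if \<omega> \<in> A then penalty a2 \<omega> else penalty a1 \<omega>) \<in> borel_measurable M"
    by measurable
  fix Y assume Y: "Y \<in> acc_set M F s T \<phi>"
  then have Y_RsT: "Y \<in> RsT M F s T"
    by (simp add: acc_set_def)
  from pair_paste[OF Y_RsT a1 a2 c A paste] penalty_le_pair[OF Y, of a1] penalty_le_pair[OF Y, of a2]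
  show "AE \<omega> in M. (if \<omega> \<in> A then penalty a2 \<omega> else penalty a1 \<omega>) \<le> ereal (pair Y c \<omega>)"
    by eventually_elim auto
qed

lemma concat_const_in_dual:
  assumes "a \<in> \<M>" "b \<in> \<M>" "A \<in> sets (F s)"
  shows "concat M F a b (\<lambda>_. s) A \<in> \<M>"
  using stable_concat_dual assms stopping_time_const sets_pre_sigma_const
  unfolding stable_concat_def by blast

lemma penalized_pair_paste:
  assumes X: "X \<in> RsT M F s T" and a1: "a1 \<in> A1 M F" and a2: "a2 \<in> A1 M F" and c: "c \<in> A1 M F"
    and A: "A \<in> sets (F s)"
    and paste: "AE \<omega> in M. \<forall>t. c t \<omega> = (if \<omega> \<in> A then a2 t \<omega> else a1 t \<omega>)"
  shows "AE \<omega> in M. (if \<omega> \<in> A then penalized_pair X a2 \<omega> else penalized_pair X a1 \<omega>)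
    \<le> penalized_pair X c \<omega>"
  using pair_paste[OF X a1 a2 c A paste] penalty_paste[OF a1 a2 c A paste]
proof eventually_elim
  case (elim \<omega>)
  show ?case
  proof (cases "\<omega> \<in> A")
    case True
    with elim add_left_mono[of "penalty a2 \<omega>" "penalty c \<omega>" "ereal (pair X a2 \<omega>)"] show ?thesis
      by simp
  next
    case False
    with elim add_left_mono[of "penalty a1 \<omega>" "penalty c \<omega>" "ereal (pair X a1 \<omega>)"] show ?thesis
      by simp
  qed
qed

lemma penalized_pair_directed:
  assumes X: "X \<in> RsT M F s T" and a1: "a1 \<in> \<M>" and a2: "a2 \<in> \<M>"
  shows "\<exists>c\<in>\<M>. (AE \<omega> in M. penalized_pair X a1 \<omega> \<le> penalized_pair X c \<omega>) \<and>
                (AE \<omega> in M. penalized_pair X a2 \<omega> \<le> penalized_pair X c \<omega>)"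
proof -
  \<comment> \<open>\<open>F s\<close>-measurable versions of the penalties make the pasting event \<open>A\<close> an element of \<open>F s\<close>.\<close>
  obtain \<Phi>1 where [measurable]: "\<Phi>1 \<in> borel_measurable (F s)" and \<Phi>1: "AE \<omega> in M. \<Phi>1 \<omega> = penalty a1 \<omega>"
    using ex_Fs_measurable_version_penalty by blast
  obtain \<Phi>2 where [measurable]: "\<Phi>2 \<in> borel_measurable (F s)" and \<Phi>2: "AE \<omega> in M. \<Phi>2 \<omega> = penalty a2 \<omega>"
    using ex_Fs_measurable_version_penalty by blast
  define A where "A = {\<omega> \<in> space (F s). ereal (pair X a1 \<omega>) + \<Phi>1 \<omega> < ereal (pair X a2 \<omega>) + \<Phi>2 \<omega>}"
  have A: "A \<in> sets (F s)"
    unfolding A_def by measurable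
  define c where "c = concat M F a1 a2 (\<lambda>_. s) A"
  have c: "c \<in> \<M>"
    unfolding c_def using concat_const_in_dual[OF a1 a2 A] .
  have paste: "AE \<omega> in M. \<forall>t. c t \<omega> = (if \<omega> \<in> A then a2 t \<omega> else a1 t \<omega>)"
    unfolding c_def using concat_const_AE_eq[OF dual_DsT[OF a1] dual_DsT[OF a2] s_le_T] .
  have "AE \<omega> in M. penalized_pair X a1 \<omega> \<le> penalized_pair X c \<omega> \<and> penalized_pair X a2 \<omega> \<le> penalized_pair X c \<omega>"
    using penalized_pair_paste[OF X dual_A1[OF a1] dual_A1[OF a2] dual_A1[OF c] A paste] \<Phi>1 \<Phi>2 AE_space
  proof eventually_elim
    case (elim \<omega>)
    have A_iff: "\<omega> \<in> A \<longleftrightarrow> penalized_pair X a1 \<omega> < penalized_pair X a2 \<omega>"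
      using elim(2-4) space_F[of s] unfolding A_def by simp
    show ?case
    proof (cases "\<omega> \<in> A")
      case True
      with A_iff elim(1) have "penalized_pair X a1 \<omega> < penalized_pair X a2 \<omega>"
        "penalized_pair X a2 \<omega> \<le> penalized_pair X c \<omega>"
        by simp_all
      then show ?thesis
        by (meson order.strict_implies_order order.trans)
    next
      case False
      with A_iff elim(1) have "penalized_pair X a2 \<omega> \<le> penalized_pair X a1 \<omega>"
        "penalized_pair X a1 \<omega> \<le> penalized_pair X c \<omega>"
        by (simp_all add: not_less)
      then show ?thesis
        by (meson order.trans)
    qed
  qed
  then have "(AE \<omega> in M. penalized_pair X a1 \<omega> \<le> penalized_pair X c \<omega>) \<and>
      (AE \<omega> in M. penalized_pair X a2 \<omega> \<le> penalized_pair X c \<omega>)"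
    by (simp only: AE_conj_iff)
  with c show ?thesis
    by blast
qed

subsection \<open>Attainment of the essential supremum\<close>

lemma measurable_penalized_pair [measurable]: "(\<lambda>\<omega>. penalized_pair X a \<omega>) \<in> borel_measurable M"
  by measurable

lemma penalized_pair_le_at_limit:
  fixes b :: "nat \<Rightarrow> 'a proc" and r :: "nat \<Rightarrow> nat"
  assumes X: "X \<in> RsT M F s T" and b: "range b \<subseteq> \<M>" and x: "x \<in> \<M>"
    and incr: "\<And>n m. n \<le> m \<Longrightarrow> AE \<omega> in M. penalized_pair X (b n) \<omega> \<le> penalized_pair X (b m) \<omega>"
    and r: "strict_mono r" and fast: "\<And>k. A1dist M (b (r k)) x < ennreal ((1/2)^k)"
  shows "AE \<omega> in M. penalized_pair X (b n) \<omega> \<le> penalized_pair X x \<omega>"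
proof -
  have conv: "AE \<omega> in M. (\<lambda>k. pair Y (b (r k)) \<omega>) \<longlonglongrightarrow> pair Y x \<omega>" if "Y \<in> RsT M F s T" for Y
    using b x dual_A1 by (intro AE_LIMSEQ_pair[OF that _ _ fast]) auto
  define W where "W \<omega> = penalized_pair X (b n) \<omega> - ereal (pair X x \<omega>)" for \<omega>
  have "AE \<omega> in M. W \<omega> \<le> penalty x \<omega>"
  proof (rule penalty_greatest)
    show "W \<in> borel_measurable M"
      unfolding W_def by measurable
    fix Y assume Y: "Y \<in> acc_set M F s T \<phi>"
    then have Y_RsT: "Y \<in> RsT M F s T"
      by (simp add: acc_set_def)
    have incr': "AE \<omega> in M. \<forall>m. n \<le> m \<longrightarrow> penalized_pair X (b n) \<omega> \<le> penalized_pair X (b m) \<omega>"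
      using incr by (simp add: AE_all_countable)
    have le_pair: "AE \<omega> in M. \<forall>k. penalty (b k) \<omega> \<le> ereal (pair Y (b k) \<omega>)"
      using penalty_le_pair[OF Y] by (simp add: AE_all_countable)
    from incr' le_pair conv[OF X] conv[OF Y_RsT]
    show "AE \<omega> in M. W \<omega> \<le> ereal (pair Y x \<omega>)"
    proof eventually_elim
      case (elim \<omega>)
      have "penalized_pair X (b n) \<omega> \<le> ereal (pair X x \<omega> + pair Y x \<omega>)"
      proof (rule ereal_le_limit_add[OF elim(3,4)])
        fix k assume "n \<le> k"
        then have "n \<le> r k"
          using seq_suble[OF r, of k] by simp
        then have "penalized_pair X (b n) \<omega> \<le> penalized_pair X (b (r k)) \<omega>"
          using elim(1) by blast
        also have "\<dots> \<le> ereal (pair X (b (r k)) \<omega>) + ereal (pair Y (b (r k)) \<omega>)"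
          using elim(2) by (intro add_left_mono) blast
        finally show "penalized_pair X (b n) \<omega> \<le> ereal (pair X (b (r k)) \<omega>) + ereal (pair Y (b (r k)) \<omega>)" .
      qed
      then show ?case
        by (simp add: W_def ereal_minus_le add.commute)
    qed
  qed
  then show ?thesis
    by eventually_elim (simp add: W_def ereal_minus_le add.commute)
qed

lemma ex_AE_greatest_penalized_pair:
  assumes X: "X \<in> RsT M F s T" and ne: "\<M> \<noteq> {}"
  shows "\<exists>x\<in>\<M>. \<forall>a\<in>\<M>. AE \<omega> in M. penalized_pair X a \<omega> \<le> penalized_pair X x \<omega>"
proof -
  define G where "G a = (\<integral>\<omega>. arctan_ereal (penalized_pair X a \<omega>) \<partial>M)" for a
  have bdd: "bdd_above (G ` \<M>)"
    unfolding G_def by (intro bdd_aboveI2[where M = 2] integral_arctan_ereal_bounds(2)) measurable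
  have "\<exists>a\<in>\<M>. (SUP a\<in>\<M>. G a) - 1 / real (Suc n) < G a" for n
    using less_cSUP_iff[OF ne bdd, of "(SUP a\<in>\<M>. G a) - 1 / real (Suc n)"] by simp
  then obtain a where a_in: "\<And>n. a n \<in> \<M>" and a: "\<And>n. (SUP a\<in>\<M>. G a) - 1 / real (Suc n) < G (a n)"
    by metis
  obtain b where b: "range b \<subseteq> \<M>" "\<And>n. AE \<omega> in M. penalized_pair X (a n) \<omega> \<le> penalized_pair X (b n) \<omega>"
    "\<And>n m. n \<le> m \<Longrightarrow> AE \<omega> in M. penalized_pair X (b n) \<omega> \<le> penalized_pair X (b m) \<omega>"
    using ex_AE_incseq_majorant[where f = "\<lambda>a \<omega>. penalized_pair X a \<omega>", OF penalized_pair_directed[OF X]] a_in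
    by blast
  obtain x r where x: "x \<in> \<M>" and r: "strict_mono r" "\<And>k. A1dist M (b (r k)) x < ennreal ((1/2)^k)"
    using A1_compact_fast_convergent_subseq[OF A1_compact_dual b(1)] by blast
  have b_le_x: "AE \<omega> in M. penalized_pair X (b n) \<omega> \<le> penalized_pair X x \<omega>" for n
    by (rule penalized_pair_le_at_limit[OF X b(1) x _ r]) (rule b(3))
  have "G (a n) \<le> G x" for n
  proof -
    have "AE \<omega> in M. penalized_pair X (a n) \<omega> \<le> penalized_pair X x \<omega>"
      using b(2)[of n] b_le_x[of n] by eventually_elim (rule order.trans)
    then show ?thesis
      unfolding G_def by (intro integral_arctan_ereal_mono_AE) auto
  qed
  then have "(SUP a\<in>\<M>. G a) \<le> G x"
    using a by (intro le_if_less_plus_inverse_Suc) (metis add.commute diff_less_eq order_less_le_trans)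
  then have G_le: "(\<integral>\<omega>. arctan_ereal (penalized_pair X a \<omega>) \<partial>M)
      \<le> (\<integral>\<omega>. arctan_ereal (penalized_pair X x \<omega>) \<partial>M)" if "a \<in> \<M>" for a
    using cSUP_upper[OF that bdd] unfolding G_def by linarith
  have "AE \<omega> in M. penalized_pair X a \<omega> \<le> penalized_pair X x \<omega>" if "a \<in> \<M>" for a
    using AE_greatest_if_directed_maximizes_integral[where f = "\<lambda>a \<omega>. penalized_pair X a \<omega>",
        OF measurable_penalized_pair penalized_pair_directed[OF X] x G_le that] .
  with x show ?thesis
    by blast
qed

lemma insurance_attained:
  assumes X: "X \<in> RsT M F s T"
    and rep: "is_essinf M ((\<lambda>a \<omega>. ereal (pair (\<lambda>t \<omega>. - X t \<omega>) a \<omega>) - penalty a \<omega>) ` \<M>)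
      (\<lambda>\<omega>. ereal (\<phi> (\<lambda>t \<omega>. - X t \<omega>) \<omega>))"
  shows "\<exists>x\<in>\<M>. AE \<omega> in M. ereal (- \<phi> (\<lambda>t \<omega>. - X t \<omega>) \<omega>) = penalized_pair X x \<omega>"
proof -
  have "\<M> \<noteq> {}"
    using is_essinf_ereal_nonempty[OF rep] by blast
  then obtain x where x: "x \<in> \<M>" "\<And>a. a \<in> \<M> \<Longrightarrow> AE \<omega> in M. penalized_pair X a \<omega> \<le> penalized_pair X x \<omega>"
    using ex_AE_greatest_penalized_pair[OF X] by blast
  have neg: "AE \<omega> in M. ereal (pair (\<lambda>t \<omega>. - X t \<omega>) a \<omega>) - penalty a \<omega> = - penalized_pair X a \<omega>"
    if "a \<in> \<M>" for a
    using pair_uminus[OF X dual_A1[OF that]] by eventually_elim (simp add: ereal_minus_eq_uminus_add)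
  have "AE \<omega> in M. ereal (\<phi> (\<lambda>t \<omega>. - X t \<omega>) \<omega>) = ereal (pair (\<lambda>t \<omega>. - X t \<omega>) x \<omega>) - penalty x \<omega>"
  proof (rule is_essinf_AE_eq_least[OF rep x(1)])
    fix a assume "a \<in> \<M>"
    from neg[OF x(1)] neg[OF this] x(2)[OF this]
    show "AE \<omega> in M. ereal (pair (\<lambda>t \<omega>. - X t \<omega>) x \<omega>) - penalty x \<omega>
        \<le> ereal (pair (\<lambda>t \<omega>. - X t \<omega>) a \<omega>) - penalty a \<omega>"
      by eventually_elim simp
  qed measurable
  with neg[OF x(1)] have "AE \<omega> in M. ereal (- \<phi> (\<lambda>t \<omega>. - X t \<omega>) \<omega>) = penalized_pair X x \<omega>"
    by eventually_elim (metis ereal_uminus_uminus uminus_ereal.simps(1))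
  with x(1) show ?thesis
    by blast
qed

end

theorem theorem4p1:
  fixes M :: "'a measure" and F :: "nat \<Rightarrow> 'a measure" and s T :: nat
    and \<phi> :: "'a proc \<Rightarrow> 'a \<Rightarrow> real" and \<M> :: "'a proc set"
  assumes "prob_space M"
    and "\<And>t. subalgebra M (F t)"
    and "\<And>t u. t \<le> u \<Longrightarrow> sets (F t) \<subseteq> sets (F u)"
    and "sets (F 0) = {{}, space M}"
    and "s \<le> T"
    and "monetary_utility M F s T \<phi>"
    and "\<M> \<subseteq> DsT M F s T"
    and "\<forall>X\<in>RsT M F s T. is_essinf M
           ((\<lambda>a \<omega>. ereal (pairing M F s T X a \<omega>) - phi_sharp M F s T \<phi> a \<omega>) ` \<M>)
           (\<lambda>\<omega>. ereal (\<phi> X \<omega>))"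
    and "A1_compact M F \<M>"
    and "stable_concat M F \<M>"
    and "\<exists>b\<in>A1p M F. \<forall>a\<in>\<M>. \<forall>t. AE \<omega> in M. dlt a t \<omega> \<le> dlt b t \<omega>"
  shows "\<forall>X\<in>RsT M F s T. \<exists>aX\<in>\<M>. AE \<omega> in M.
           ereal (- \<phi> (\<lambda>t \<omega>'. - X t \<omega>') \<omega>) = ereal (pairing M F s T X aX \<omega>) + phi_sharp M F s T \<phi> aX \<omega>"
proof
  fix X assume X: "X \<in> RsT M F s T"
  interpret filtered_prob_space M F
  proof (intro filtered_prob_space.intro filtration.intro filtered_prob_space_axioms.intro)
    show "space (F t) = space M" for t
      using assms(2)[of t] by (simp add: subalgebra_def)
  qed (use assms(1-3) in auto)
  interpret stable_compact_dual_set M F s T \<phi> \<M>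
    by (intro stable_compact_dual_set.intro stable_compact_dual_set_axioms.intro
        filtered_prob_space_axioms assms(5,7,9,10))
  have "is_essinf M ((\<lambda>a \<omega>. ereal (pairing M F s T (\<lambda>t \<omega>. - X t \<omega>) a \<omega>) - phi_sharp M F s T \<phi> a \<omega>) ` \<M>)
      (\<lambda>\<omega>. ereal (\<phi> (\<lambda>t \<omega>. - X t \<omega>) \<omega>))"
    using bspec[OF assms(8) RsT_uminus[OF X]] .
  from insurance_attained[OF X this]
  show "\<exists>aX\<in>\<M>. AE \<omega> in M.
      ereal (- \<phi> (\<lambda>t \<omega>'. - X t \<omega>') \<omega>) = ereal (pairing M F s T X aX \<omega>) + phi_sharp M F s T \<phi> aX \<omega>" .
qed

end
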